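(* Let $I$ and $\tilde I$ be closed arcs of $\mathbb{T}$ with dyadic endpoints, and let $\xi\colon I\to\tilde I$ be a map onto $\tilde I$ that is linear in the angular coordinate with slope an integer power of $2$. Then $\xi$ belongs to the pseudo-group $\Upsilon_g$, i.e., there exist $m,n\in\mathbb{N}_0$ with $g^m\circ\xi=g^n$ on $I$.
   Context: $\mathbb{T}$ is the unit circle with angular coordinate $\theta\in\mathbb{R}/\mathbb{Z}$ (points $e^{2\pi i\theta}$); dyadic points are those with $\theta=k/2^j$. $g(z)=z^2$ is the doubling map $\theta\mapsto2\theta$ of $\mathbb{T}$. $\Upsilon_g$ denotes the collection of homeomorphisms $\xi\colon I\to\tilde I$ between arcs of $\mathbb{T}$ of the form $\xi=g^{-m}\circ g^n$ for some $m,n\in\mathbb{N}_0$, meaning that $\xi$ is a continuous lift of $g^n|_I$ under $g^m$, i.e., $g^m\circ\xi=g^n$ on $I$; such maps are linear in $\theta$ with slope $2^{n-m}$. *)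

theory Defs
  imports "HOL-Analysis.Analysis"
begin

definition circ :: "real \<Rightarrow> complex" where
  "circ \<theta> = exp (2 * of_real pi * \<i> * of_real \<theta>)"

definition g :: "complex \<Rightarrow> complex" where
  "g z = z ^ 2"

definition dyadic :: "real \<Rightarrow> bool" where
  "dyadic x \<longleftrightarrow> (\<exists>(k::int) (j::nat). x = of_int k / 2 ^ j)"

definition circ_arc :: "real \<Rightarrow> real \<Rightarrow> complex set" where
  "circ_arc a b = circ ` {a..b}"

definition dyadic_closed_arc :: "complex set \<Rightarrow> bool" where
  "dyadic_closed_arc I \<longleftrightarrow>
     (\<exists>a b. dyadic a \<and> dyadic b \<and> a < b \<and> b < a + 1 \<and> I = circ_arc a b)"

end

theory Submission imports Defs begin

text \<open>The image \<xi>(I) is the arc of angles from c to c + 2^k(b - a). Two arcs of angles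
  that agree as point sets on the circle, one of them proper, start at congruent angles:
  otherwise the first arc, which starts strictly inside the second one and still reaches its
  initial point, must run over the gap between the end and the start of the proper arc. Hence c is
  dyadic modulo 1, and then large powers of the doubling map absorb all dyadic offsets.\<close>

lemma circ_eq_iff: "circ x = circ y \<longleftrightarrow> (\<exists>n::int. x = y + of_int n)"
proof -
  have "circ x = circ y \<longleftrightarrow>
      (\<exists>n::int. (2 * pi * \<i>) * complex_of_real x = (2 * pi * \<i>) * complex_of_real (y + of_int n))"
    unfolding circ_def exp_eq by (simp add: algebra_simps)
  also have "\<dots> \<longleftrightarrow> (\<exists>n::int. x = y + of_int n)"
    by (simp add: pi_neq_zero del: of_real_add)
  finally show ?thesis .
qed

lemma circ_add: "circ (x + y) = circ x * circ y"
  unfolding circ_def by (simp add: algebra_simps flip: exp_add)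

lemma circ_of_int: "circ (of_int n) = 1"
  using circ_eq_iff[of "of_int n" 0] by (simp add: circ_def)

lemma circ_in_image_iff: "circ x \<in> circ ` S \<longleftrightarrow> (\<exists>n::int. x + of_int n \<in> S)"
proof
  assume "circ x \<in> circ ` S"
  then obtain y and n :: int where "y \<in> S" "x = y + of_int n" by (auto simp: circ_eq_iff)
  then have "x + of_int (- n) \<in> S" by simp
  then show "\<exists>n::int. x + of_int n \<in> S" by blast
next
  assume "\<exists>n::int. x + of_int n \<in> S"
  then obtain n :: int where "x + of_int n \<in> S" by blast
  moreover have "circ x = circ (x + of_int n)" by (simp add: circ_add circ_of_int)
  ultimately show "circ x \<in> circ ` S" by blast
qed

lemma funpow_g_circ: "(g ^^ m) (circ x) = circ (2 ^ m * x)"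
proof (induction m arbitrary: x)
  case (Suc m)
  have "g (circ y) = circ (2 * y)" for y
    unfolding g_def circ_def by (simp add: power2_eq_square flip: exp_add) (simp add: algebra_simps)
  with Suc show ?case by (simp add: mult.assoc)
qed simp

lemma circ_image_atLeastAtMost_start_cong:
  assumes "c \<le> d" and "a < b" and "b < a + 1"
    and same: "circ ` {c..d} = circ ` {a..b}"
  shows "\<exists>n::int. c = a + of_int n"
proof -
  have "circ c \<in> circ ` {a..b}" using same \<open>c \<le> d\<close> by auto
  then obtain n0 :: int where s: "c + n0 \<in> {a..b}" by (auto simp: circ_in_image_iff)
  have "c + n0 = a"
  proof (rule ccontr)
    assume "c + n0 \<noteq> a"
    with s have start_inside: "a < c + n0" by auto
    have "circ a \<in> circ ` {c..d}" using same \<open>a < b\<close> by auto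
    then obtain n1 :: int where n1: "a + n1 \<in> {c..d}" by (auto simp: circ_in_image_iff)
    then have "real_of_int (n0 + n1) > 0" using start_inside by simp
    then have "n0 + n1 \<ge> 1" by linarith
    then have "real_of_int n0 + n1 \<ge> 1" by (simp flip: of_int_add)
    \<comment> \<open>the midpoint of the gap between b and a + 1, which [c, d] now has to cover\<close>
    define p where "p = (a + b + 1) / 2"
    have "p - n0 \<in> {c..d}"
      using s n1 \<open>real_of_int n0 + n1 \<ge> 1\<close> \<open>b < a + 1\<close>
      unfolding p_def by (auto simp: field_simps)
    then have "circ p \<in> circ ` {a..b}"
      using same by (metis circ_in_image_iff diff_conv_add_uminus of_int_minus)
    then obtain n2 :: int where "p + n2 \<in> {a..b}" by (auto simp: circ_in_image_iff)
    then have "- 1 < real_of_int n2" "real_of_int n2 < 0"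
      using \<open>a < b\<close> \<open>b < a + 1\<close> by (auto simp: p_def field_simps)
    then have "- 1 < n2" "n2 < 0" by simp_all
    then show False by linarith
  qed
  then show ?thesis by (metis add_diff_cancel_right' diff_conv_add_uminus of_int_minus)
qed

lemma dyadic_add_of_int: "dyadic x \<Longrightarrow> dyadic (x + of_int n)"
proof -
  assume "dyadic x"
  then obtain q :: int and j :: nat where "x = q / 2 ^ j" unfolding dyadic_def by blast
  then have "x + of_int n = of_int (q + n * 2 ^ j) / 2 ^ j" by (simp add: field_simps)
  then show ?thesis unfolding dyadic_def by blast
qed

lemma dyadic_imp_pow2_mult_Ints:
  assumes "dyadic x"
  shows "\<exists>j. \<forall>n\<ge>j. 2 ^ n * x \<in> \<int>"
proof -
  obtain q :: int and j :: nat where x: "x = q / 2 ^ j" using assms unfolding dyadic_def by blast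
  have "2 ^ n * x = of_int q * 2 ^ (n - j)" if "j \<le> n" for n
    using that by (simp add: x power_diff)
  then show ?thesis by (metis Ints_mult Ints_of_int Ints_power Ints_numeral)
qed

lemma affine_pow2_slope_in_pseudogroup:
  assumes "dyadic a" and "dyadic c"
  shows "\<exists>m n :: nat. \<forall>t. (g ^^ m) (circ (c + 2 powi k * (t - a))) = (g ^^ n) (circ t)"
proof -
  obtain ja where ja: "\<And>n. n \<ge> ja \<Longrightarrow> 2 ^ n * a \<in> \<int>"
    using dyadic_imp_pow2_mult_Ints[OF \<open>dyadic a\<close>] by blast
  obtain jc where jc: "\<And>n. n \<ge> jc \<Longrightarrow> 2 ^ n * c \<in> \<int>"
    using dyadic_imp_pow2_mult_Ints[OF \<open>dyadic c\<close>] by blast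
  define m where "m = ja + jc + nat \<bar>k\<bar>"
  define n where "n = nat (int m + k)"
  have "int n = int m + k" by (simp add: n_def m_def)
  then have slope: "2 ^ m * 2 powi k = (2::real) ^ n"
    by (metis power_int_add power_int_of_nat zero_neq_numeral)
  have "jc \<le> m" "ja \<le> n" by (simp_all add: n_def m_def)
  then obtain u v where u: "2 ^ m * c = of_int u" and v: "2 ^ n * a = of_int v"
    using ja jc by (metis Ints_cases)
  have "(g ^^ m) (circ (c + 2 powi k * (t - a))) = (g ^^ n) (circ t)" for t
  proof -
    have "2 ^ m * (c + 2 powi k * (t - a)) = 2 ^ n * t + of_int (u - v)"
      using slope u v by (simp add: algebra_simps flip: mult.assoc)
    then have "(g ^^ m) (circ (c + 2 powi k * (t - a))) = circ (2 ^ n * t + of_int (u - v))"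
      by (simp only: funpow_g_circ)
    also have "\<dots> = (g ^^ n) (circ t)"
      by (simp only: funpow_g_circ circ_add circ_of_int mult_1_right)
    finally show ?thesis .
  qed
  then show ?thesis by blast
qed

theorem lemma5p2:
  fixes I J :: "complex set" and \<xi> :: "complex \<Rightarrow> complex"
    and a b c :: real and k :: int
  assumes "dyadic a" and "dyadic b" and "a < b" and "b < a + 1" and "I = circ_arc a b"
    and "dyadic_closed_arc J"
    and lin: "\<forall>t\<in>{a..b}. \<xi> (circ t) = circ (c + 2 powi k * (t - a))"
    and onto: "\<xi> ` I = J"
  shows "\<exists>m n :: nat. \<forall>z\<in>I. (g ^^ m) (\<xi> z) = (g ^^ n) z"
proof -
  obtain a' b' where "dyadic a'" "a' < b'" "b' < a' + 1" and J: "J = circ_arc a' b'"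
    using \<open>dyadic_closed_arc J\<close> unfolding dyadic_closed_arc_def by blast
  have "\<xi> ` I = (\<lambda>t. circ (c + 2 powi k * (t - a))) ` {a..b}"
    unfolding \<open>I = circ_arc a b\<close> circ_arc_def image_image using lin by (intro image_cong) simp_all
  also have "\<dots> = circ ` ((\<lambda>t. 2 powi k * t + (c - 2 powi k * a)) ` {a..b})"
    unfolding image_image by (rule image_cong) (simp_all add: algebra_simps)
  also have "\<dots> = circ ` {c..c + 2 powi k * (b - a)}"
    using \<open>a < b\<close> by (subst image_affinity_atLeastAtMost) (simp add: algebra_simps)
  finally have "circ ` {c..c + 2 powi k * (b - a)} = circ ` {a'..b'}"
    using onto J by (simp add: circ_arc_def)
  moreover have "c \<le> c + 2 powi k * (b - a)" using \<open>a < b\<close> by simp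
  ultimately obtain l :: int where "c = a' + l"
    using circ_image_atLeastAtMost_start_cong \<open>a' < b'\<close> \<open>b' < a' + 1\<close> by blast
  then have "dyadic c" using \<open>dyadic a'\<close> dyadic_add_of_int by simp
  then obtain m n where "\<forall>t. (g ^^ m) (circ (c + 2 powi k * (t - a))) = (g ^^ n) (circ t)"
    using affine_pow2_slope_in_pseudogroup[OF \<open>dyadic a\<close>] by blast
  then show ?thesis
    using lin unfolding \<open>I = circ_arc a b\<close> circ_arc_def by auto
qed

end
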